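(* For an odd integer $n$ and any integer $1\leq k\leq\frac12(n-3)$, with $q=uv$, $$\sum_{1\leq i\leq\frac12(n-1)}e_{2i}\,g_{n-2i,n}\prod_{j=k-i+1}^{\frac12(n-1)-i}\frac{q^{2j}-1}{q^{2j-2k+2i}-1}=\frac{q^{nk}-1}{q-1}\prod_{j=k+1}^{\frac12(n-1)}\frac{q^{2j}-1}{q^{2j-2k}-1}.$$
   Context: $e_{2i}=e_{2i}(u,v)$ is the Hodge–Deligne polynomial of the variety of nondegenerate skew forms on $\mathbb{C}^{2i}$ up to scaling; $g_{m,n}=g_{m,n}(u,v)$ is the Hodge–Deligne polynomial of the Grassmannian $G(m,n)$. Empty products equal $1$. *)

theory Defs
  imports Complex_Main "HOL-Computational_Algebra.Polynomial" "HOL-Computational_Algebra.Fraction_Field"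
begin

text \<open>The formal variables u, v of Hodge--Deligne polynomials, living in the field of
  fractions of the bivariate polynomial ring Z[u,v] (encoded as int poly poly:
  inner variable u, outer variable v).\<close>
definition hd_u :: "int poly poly fract" where
  "hd_u = Fract [:[:0, 1:]:] 1"

definition hd_v :: "int poly poly fract" where
  "hd_v = Fract [:0, 1:] 1"

definition hd_grass :: "'a::field \<Rightarrow> 'a \<Rightarrow> nat \<Rightarrow> nat \<Rightarrow> 'a" where
  "hd_grass u v m n = (let q = u * v in
      (\<Prod>j\<in>{1..m}. (q ^ (n - m + j) - 1) / (q ^ j - 1)))"

text \<open>Hodge--Deligne polynomial of the variety of nondegenerate skew forms on C^(2i)
  up to scaling, i.e. (GL_(2i)/Sp_(2i))/C^*:
  e_(2i) = q^(i(i-1)) * prod_(j=2..i) (q^(2j-1) - 1), q = uv.\<close>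
definition hd_skew :: "'a::field \<Rightarrow> 'a \<Rightarrow> nat \<Rightarrow> 'a" where
  "hd_skew u v i = (let q = u * v in
      q ^ (i * (i - 1)) * (\<Prod>j\<in>{2..i}. (q ^ (2 * j - 1) - 1)))"

end

theory Submission
  imports Defs
begin

text \<open>With q = uv, Q = q^2 and n = 2m + 1, write e_{2i}, the Gaussian binomial g_{n-2i,n} and
  the product over j in terms of the factorials \<Prod>(q^j - 1): the factors with odd exponents
  cancel, and (q - 1) times the i-th summand becomes [m,k]_Q [k,i]_Q \<Prod>_{t<i} (q^n - Q^t),
  while for i > k the summand vanishes because its product contains the factor j = 0. The
  q-analogue of Newton's interpolation formula, x^k = \<Sum>_i [k,i]_Q \<Prod>_{t<i} (x - Q^t), taken
  at x = q^n, sums the terms with i \<ge> 1 to q^{nk} - 1; the product on the right-hand side is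
  [m,k]_Q.\<close>

(* (q - 1)^a times the q-factorial [a]_q!; the powers of q - 1 cancel in every quotient below. *)
definition qfact :: "'a::comm_ring_1 \<Rightarrow> nat \<Rightarrow> 'a" where
  "qfact q a = (\<Prod>j\<in>{1..a}. q ^ j - 1)"

definition qfact_odd :: "'a::comm_ring_1 \<Rightarrow> nat \<Rightarrow> 'a" where
  "qfact_odd q a = (\<Prod>j\<in>{1..a}. q ^ (2 * j - 1) - 1)"

definition not_root_of_unity :: "'a::comm_ring_1 \<Rightarrow> bool" where
  "not_root_of_unity q \<longleftrightarrow> (\<forall>j>0. q ^ j \<noteq> 1)"

fun qbinom :: "'a::comm_ring_1 \<Rightarrow> nat \<Rightarrow> nat \<Rightarrow> 'a" where
  "qbinom q 0 i = (if i = 0 then 1 else 0)"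
| "qbinom q (Suc k) 0 = 1"
| "qbinom q (Suc k) (Suc i) = qbinom q k i + q ^ Suc i * qbinom q k (Suc i)"

lemma qbinom_eq_0: "k < i \<Longrightarrow> qbinom q k i = 0"
  by (induction q k i rule: qbinom.induct) auto

lemma qbinom_0_right [simp]: "qbinom q k 0 = 1"
  by (cases k) auto

lemma qfact_Suc: "qfact q (Suc a) = qfact q a * (q ^ Suc a - 1)"
  by (simp add: qfact_def)

lemma qfact_odd_Suc: "qfact_odd q (Suc a) = qfact_odd q a * (q ^ (2 * a + 1) - 1)"
  by (simp add: qfact_odd_def)

lemma power_eq_sum_qbinom:
  fixes x :: "'a::comm_ring_1"
  shows "x ^ k = (\<Sum>i\<le>k. qbinom q k i * (\<Prod>t<i. x - q ^ t))"
proof (induction k)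
  case 0
  then show ?case by simp
next
  case (Suc k)
  define P where "P i = (\<Prod>t<i. x - q ^ t)" for i
  have x_mult_P: "x * P i = P (Suc i) + q ^ i * P i" for i
    by (simp add: P_def algebra_simps)
  have "x ^ Suc k = (\<Sum>i\<le>k. qbinom q k i * (x * P i))"
    using Suc by (simp add: P_def sum_distrib_left mult_ac)
  also have "\<dots> = (\<Sum>i\<le>k. qbinom q k i * P (Suc i)) + (\<Sum>i\<le>Suc k. qbinom q k i * q ^ i * P i)"
    by (simp add: x_mult_P distrib_left sum.distrib mult.assoc qbinom_eq_0)
  also have "\<dots> = qbinom q (Suc k) 0 * P 0 + (\<Sum>i\<le>k. qbinom q (Suc k) (Suc i) * P (Suc i))"
    by (subst sum.atMost_Suc_shift) (simp add: P_def sum.distrib[symmetric] algebra_simps)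
  also have "\<dots> = (\<Sum>i\<le>Suc k. qbinom q (Suc k) i * P i)"
    by (subst sum.atMost_Suc_shift) simp
  finally show ?case
    by (simp add: P_def)
qed

lemma sum_qbinom_from_1:
  fixes x :: "'a::comm_ring_1"
  shows "(\<Sum>i\<in>{1..k}. qbinom q k i * (\<Prod>t<i. x - q ^ t)) = x ^ k - 1"
proof -
  have "{..k} = insert 0 {1..k}"
    by auto
  then show ?thesis
    using power_eq_sum_qbinom[of x k q] by simp
qed

lemma qbinom_mult_qfact:
  "i \<le> k \<Longrightarrow> qbinom q k i * qfact q i * qfact q (k - i) = qfact q k"
proof (induction k arbitrary: i)
  case 0
  then show ?case by (simp add: qfact_def)
next
  case (Suc k)
  show ?case
  proof (cases i)
    case 0
    then show ?thesis by (simp add: qfact_def)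
  next
    case (Suc j)
    have left: "qbinom q k j * qfact q j * qfact q (k - j) = qfact q k"
      using Suc.IH Suc Suc.prems by simp
    have right: "q ^ Suc j * qbinom q k (Suc j) * qfact q (Suc j) * qfact q (k - j)
                 = (q ^ Suc k - q ^ Suc j) * qfact q k"
    proof (cases "j < k")
      case True
      then have "k - j = Suc (k - Suc j)" by simp
      then have split: "qfact q (k - j) = qfact q (k - Suc j) * (q ^ (k - j) - 1)"
        by (simp only: qfact_Suc)
      have IH: "qbinom q k (Suc j) * qfact q (Suc j) * qfact q (k - Suc j) = qfact q k"
        using Suc.IH True by simp
      have "Suc j + (k - j) = Suc k"
        using True by simp
      then have power: "q ^ Suc j * (q ^ (k - j) - 1) = q ^ Suc k - q ^ Suc j"
        by (metis power_add right_diff_distrib mult_1_right)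
      have "q ^ Suc j * qbinom q k (Suc j) * qfact q (Suc j) * qfact q (k - j)
            = (qbinom q k (Suc j) * qfact q (Suc j) * qfact q (k - Suc j))
              * (q ^ Suc j * (q ^ (k - j) - 1))"
        unfolding split by (simp only: mult_ac)
      then show ?thesis
        unfolding IH power by (simp only: mult.commute)
    next
      case False
      then show ?thesis
        using Suc Suc.prems by (simp add: qbinom_eq_0)
    qed
    have "qbinom q (Suc k) i * qfact q i * qfact q (Suc k - i)
          = qbinom q k j * qfact q j * qfact q (k - j) * (q ^ Suc j - 1)
            + q ^ Suc j * qbinom q k (Suc j) * qfact q (Suc j) * qfact q (k - j)"
      using Suc by (simp only: qbinom.simps qfact_Suc diff_Suc_Suc) (simp add: algebra_simps)
    also have "\<dots> = (q ^ Suc k - 1) * qfact q k"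
      unfolding left right by (simp add: algebra_simps)
    finally show ?thesis
      by (simp add: qfact_Suc mult.commute)
  qed
qed

lemma qfact_add: "qfact q (a + b) = qfact q b * (\<Prod>j\<in>{1..a}. q ^ (b + j) - 1)"
  by (induction a) (simp_all add: qfact_Suc prod.nat_ivl_Suc' algebra_simps)

lemma qfact_double: "qfact q (2 * a) = qfact (q ^ 2) a * qfact_odd q a"
proof (induction a)
  case 0
  then show ?case by (simp add: qfact_def qfact_odd_def)
next
  case (Suc a)
  have "qfact q (2 * Suc a) = qfact q (2 * a) * (q ^ (2 * a + 1) - 1) * (q ^ (2 * a + 2) - 1)"
    by (simp add: qfact_Suc)
  moreover have "(q ^ 2) ^ Suc a = q ^ (2 * a + 2)"
    by (subst power_mult[symmetric]) simp
  ultimately show ?case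
    using Suc by (simp only: qfact_Suc qfact_odd_Suc mult_ac)
qed

lemma qfact_double_Suc: "qfact q (2 * a + 1) = qfact (q ^ 2) a * qfact_odd q (Suc a)"
  using qfact_Suc[of q "2 * a"] by (simp add: qfact_double qfact_odd_Suc mult.assoc)

lemma not_root_of_unity_power:
  "not_root_of_unity q \<Longrightarrow> d > 0 \<Longrightarrow> not_root_of_unity (q ^ d)"
  by (simp add: not_root_of_unity_def flip: power_mult)

lemma qfact_nonzero: "not_root_of_unity (q :: 'a::idom) \<Longrightarrow> qfact q a \<noteq> 0"
  by (auto simp: qfact_def not_root_of_unity_def)

lemma qfact_odd_nonzero: "not_root_of_unity (q :: 'a::idom) \<Longrightarrow> qfact_odd q a \<noteq> 0"
  by (auto simp: qfact_odd_def not_root_of_unity_def)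

lemma qbinom_eq_qfact_quotient:
  fixes q :: "'a::field"
  assumes "not_root_of_unity q" "i \<le> k"
  shows "qbinom q k i = qfact q k / (qfact q i * qfact q (k - i))"
  using qbinom_mult_qfact[OF assms(2), of q] qfact_nonzero[OF assms(1)]
  by (simp add: field_simps)

lemma prod_qratio_eq_qfact_quotient:
  fixes q :: "'a::field"
  assumes "not_root_of_unity q"
  shows "(\<Prod>j\<in>{b + 1..b + a}. (q ^ j - 1) / (q ^ (j - b) - 1))
         = qfact q (a + b) / (qfact q a * qfact q b)"
proof -
  have "(\<Prod>j\<in>{b + 1..b + a}. (q ^ j - 1) / (q ^ (j - b) - 1))
        = (\<Prod>j\<in>{1..a}. (q ^ (b + j) - 1) / (q ^ j - 1))"
    using prod.shift_bounds_cl_nat_ivl[of "\<lambda>j. (q ^ j - 1) / (q ^ (j - b) - 1)" 1 b a]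
    by (simp add: add.commute)
  also have "\<dots> = (\<Prod>j\<in>{1..a}. q ^ (b + j) - 1) / qfact q a"
    by (simp add: prod_dividef qfact_def)
  also have "\<dots> = qfact q (a + b) / (qfact q a * qfact q b)"
    using qfact_add[of q a b] qfact_nonzero[OF assms] by (simp add: field_simps)
  finally show ?thesis .
qed

lemma prod_qfalling_odd_power:
  fixes q :: "'a::field"
  assumes "not_root_of_unity q" "i \<le> m + 1"
  shows "(\<Prod>t<i. q ^ (2 * m + 1) - (q ^ 2) ^ t)
         = q ^ (i * (i - 1)) * qfact_odd q (m + 1) / qfact_odd q (m + 1 - i)"
  using assms(2)
proof (induction i)
  case 0
  then show ?case
    using qfact_odd_nonzero[OF assms(1)] by simp
next
  case (Suc i)
  have "2 * m + 1 = 2 * i + (2 * (m - i) + 1)"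
    using Suc.prems by simp
  then have "q ^ (2 * m + 1) = q ^ (2 * i) * q ^ (2 * (m - i) + 1)"
    by (metis power_add)
  then have factor: "q ^ (2 * m + 1) - (q ^ 2) ^ i = q ^ (2 * i) * (q ^ (2 * (m - i) + 1) - 1)"
    by (simp add: right_diff_distrib flip: power_mult)
  have odd_split: "qfact_odd q (m + 1 - i) = qfact_odd q (m + 1 - Suc i) * (q ^ (2 * (m - i) + 1) - 1)"
    using Suc.prems qfact_odd_Suc[of q "m - i"] by (simp add: Suc_diff_le)
  have nonzero: "qfact_odd q (m + 1 - Suc i) \<noteq> 0" "q ^ (2 * (m - i) + 1) - 1 \<noteq> 0"
    using assms(1) by (auto simp: qfact_odd_nonzero not_root_of_unity_def)
  have "(\<Prod>t<Suc i. q ^ (2 * m + 1) - (q ^ 2) ^ t)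
        = q ^ (i * (i - 1)) * qfact_odd q (m + 1) / qfact_odd q (m + 1 - i)
          * (q ^ (2 * i) * (q ^ (2 * (m - i) + 1) - 1))"
    using Suc by (simp only: prod.lessThan_Suc factor Suc_leD)
  also have "\<dots> = q ^ (i * (i - 1) + 2 * i) * qfact_odd q (m + 1) / qfact_odd q (m + 1 - Suc i)"
    unfolding odd_split power_add using nonzero by (simp add: field_simps)
  also have "i * (i - 1) + 2 * i = Suc i * (Suc i - 1)"
    by (cases i) (simp_all add: algebra_simps)
  finally show ?case .
qed

lemma hd_skew_mult_q_minus_1:
  assumes "1 \<le> i"
  shows "(u * v - 1) * hd_skew u v i = (u * v) ^ (i * (i - 1)) * qfact_odd (u * v) i"
proof -
  have "qfact_odd (u * v) i = (u * v - 1) * (\<Prod>j\<in>{2..i}. (u * v) ^ (2 * j - 1) - 1)"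
    using prod.atLeast_Suc_atMost[OF assms, of "\<lambda>j. (u * v) ^ (2 * j - 1) - 1"]
    by (simp add: qfact_odd_def numeral_2_eq_2)
  then show ?thesis
    by (simp add: hd_skew_def Let_def mult_ac)
qed

lemma hd_grass_eq_qfact_quotient:
  assumes "not_root_of_unity (u * v)" "m \<le> n"
  shows "hd_grass u v m n = qfact (u * v) n / (qfact (u * v) (n - m) * qfact (u * v) m)"
proof -
  have "hd_grass u v m n = (\<Prod>j\<in>{1..m}. (u * v) ^ (n - m + j) - 1) / qfact (u * v) m"
    by (simp add: hd_grass_def Let_def prod_dividef qfact_def)
  also have "(\<Prod>j\<in>{1..m}. (u * v) ^ (n - m + j) - 1) = qfact (u * v) n / qfact (u * v) (n - m)"
    using qfact_add[of "u * v" m "n - m"] qfact_nonzero[OF assms(1)] assms(2) by simp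
  finally show ?thesis
    by simp
qed

lemma prod_powi_ratio_eq_0:
  fixes q :: "'a::field"
  assumes "k < i" "i \<le> m"
  shows "(\<Prod>j\<in>{int k - int i + 1 .. int m - int i}.
            (q powi (2 * j) - 1) / (q powi (2 * j - 2 * int k + 2 * int i) - 1)) = 0"
  by (rule prod_zero) (use assms in \<open>auto intro!: bexI[of _ 0]\<close>)

lemma prod_powi_ratio_eq_qfact_quotient:
  fixes q :: "'a::field"
  assumes "not_root_of_unity q" "i \<le> k" "k \<le> m"
  shows "(\<Prod>j\<in>{int k - int i + 1 .. int m - int i}.
            (q powi (2 * j) - 1) / (q powi (2 * j - 2 * int k + 2 * int i) - 1))
         = qfact (q ^ 2) (m - i) / (qfact (q ^ 2) (m - k) * qfact (q ^ 2) (k - i))"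
proof -
  define b where "b = k - i"
  have interval: "{int k - int i + 1 .. int m - int i} = int ` {b + 1 .. b + (m - k)}"
    using assms by (simp add: b_def image_int_atLeastAtMost of_nat_diff)
  have factor: "(q powi (2 * int j) - 1) / (q powi (2 * int j - 2 * int k + 2 * int i) - 1)
                = ((q ^ 2) ^ j - 1) / ((q ^ 2) ^ (j - b) - 1)"
    if "j \<in> {b + 1 .. b + (m - k)}" for j
  proof -
    have "2 * int j = int (2 * j)" "2 * int j - 2 * int k + 2 * int i = int (2 * (j - b))"
      using that assms(2) by (auto simp: b_def)
    then show ?thesis
      by (simp only: power_int_of_nat power_mult)
  qed
  have "(\<Prod>j\<in>{int k - int i + 1 .. int m - int i}.
            (q powi (2 * j) - 1) / (q powi (2 * j - 2 * int k + 2 * int i) - 1))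
        = (\<Prod>j\<in>{b + 1 .. b + (m - k)}. ((q ^ 2) ^ j - 1) / ((q ^ 2) ^ (j - b) - 1))"
    unfolding interval by (simp add: prod.reindex factor)
  also have "\<dots> = qfact (q ^ 2) (m - k + b) / (qfact (q ^ 2) (m - k) * qfact (q ^ 2) b)"
    by (rule prod_qratio_eq_qfact_quotient, rule not_root_of_unity_power[OF assms(1)]) simp
  also have "m - k + b = m - i"
    using assms by (simp add: b_def)
  finally show ?thesis
    by (simp add: b_def)
qed

lemma skew_grass_summand_eq:
  fixes u v :: "'a::field"
  defines "q \<equiv> u * v"
  assumes q: "not_root_of_unity q" and i: "1 \<le> i" "i \<le> k" and "k \<le> m"
  shows "(q - 1) * (hd_skew u v i * hd_grass u v (2 * m + 1 - 2 * i) (2 * m + 1)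
           * (\<Prod>j\<in>{int k - int i + 1 .. int m - int i}.
                (q powi (2 * j) - 1) / (q powi (2 * j - 2 * int k + 2 * int i) - 1)))
         = qfact (q ^ 2) m / (qfact (q ^ 2) (m - k) * qfact (q ^ 2) k)
           * (qbinom (q ^ 2) k i * (\<Prod>t<i. q ^ (2 * m + 1) - (q ^ 2) ^ t))"
proof -
  define Q where "Q = q ^ 2"
  have Q: "not_root_of_unity Q"
    using not_root_of_unity_power[OF q] by (simp add: Q_def)
  have nonzero: "qfact Q a \<noteq> 0" "qfact_odd q a \<noteq> 0" for a
    using q Q by (simp_all add: qfact_nonzero qfact_odd_nonzero)
  have skew: "(q - 1) * hd_skew u v i = q ^ (i * (i - 1)) * qfact_odd q i"
    using hd_skew_mult_q_minus_1[OF i(1)] by (simp add: q_def)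
  have "2 * m + 1 - (2 * (m - i) + 1) = 2 * i" "Suc (m - i) = m + 1 - i"
    using i assms(5) by simp_all
  moreover have "2 * m + 1 - 2 * i = 2 * (m - i) + 1"
    using i assms(5) by simp
  ultimately have grass: "hd_grass u v (2 * m + 1 - 2 * i) (2 * m + 1)
      = qfact Q m * qfact_odd q (m + 1)
        / (qfact Q i * qfact_odd q i * (qfact Q (m - i) * qfact_odd q (m + 1 - i)))"
    using hd_grass_eq_qfact_quotient[of u v "2 * (m - i) + 1" "2 * m + 1"] q
    by (simp only: q_def Q_def qfact_double qfact_double_Suc) simp
  have coefficient: "(\<Prod>j\<in>{int k - int i + 1 .. int m - int i}.
      (q powi (2 * j) - 1) / (q powi (2 * j - 2 * int k + 2 * int i) - 1))
      = qfact Q (m - i) / (qfact Q (m - k) * qfact Q (k - i))"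
    using prod_powi_ratio_eq_qfact_quotient[OF q i(2) assms(5)] by (simp add: Q_def)
  have binom: "qbinom Q k i = qfact Q k / (qfact Q i * qfact Q (k - i))"
    using qbinom_eq_qfact_quotient[OF Q i(2)] .
  have falling: "(\<Prod>t<i. q ^ (2 * m + 1) - Q ^ t)
      = q ^ (i * (i - 1)) * qfact_odd q (m + 1) / qfact_odd q (m + 1 - i)"
    using prod_qfalling_odd_power[OF q] i assms(5) by (simp add: Q_def)
  have "(q - 1) * (hd_skew u v i * hd_grass u v (2 * m + 1 - 2 * i) (2 * m + 1)
           * (\<Prod>j\<in>{int k - int i + 1 .. int m - int i}.
                (q powi (2 * j) - 1) / (q powi (2 * j - 2 * int k + 2 * int i) - 1)))
        = qfact Q m / (qfact Q (m - k) * qfact Q k) * (qbinom Q k i * (\<Prod>t<i. q ^ (2 * m + 1) - Q ^ t))"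
    unfolding mult.assoc[symmetric] skew grass coefficient binom falling
    using nonzero by (simp add: field_simps)
  then show ?thesis
    by (simp only: Q_def)
qed

lemma skew_grass_sum_eq:
  fixes u v :: "'a::field"
  defines "q \<equiv> u * v"
  assumes q: "not_root_of_unity q" and "k \<le> m"
  shows "(\<Sum>i\<in>{1..m}. hd_skew u v i * hd_grass u v (2 * m + 1 - 2 * i) (2 * m + 1)
           * (\<Prod>j\<in>{int k - int i + 1 .. int m - int i}.
                (q powi (2 * j) - 1) / (q powi (2 * j - 2 * int k + 2 * int i) - 1)))
         = (q ^ ((2 * m + 1) * k) - 1) / (q - 1)
           * (\<Prod>j\<in>{k + 1 .. m}. (q ^ (2 * j) - 1) / (q ^ (2 * j - 2 * k) - 1))"
proof -
  define summand where "summand i = hd_skew u v i * hd_grass u v (2 * m + 1 - 2 * i) (2 * m + 1)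
           * (\<Prod>j\<in>{int k - int i + 1 .. int m - int i}.
                (q powi (2 * j) - 1) / (q powi (2 * j - 2 * int k + 2 * int i) - 1))" for i
  define R where "R = qfact (q ^ 2) m / (qfact (q ^ 2) (m - k) * qfact (q ^ 2) k)"
  define falling where "falling i = (\<Prod>t<i. q ^ (2 * m + 1) - (q ^ 2) ^ t)" for i
  have "(\<Sum>i\<in>{1..m}. summand i) = (\<Sum>i\<in>{1..k}. summand i)"
  proof (rule sum.mono_neutral_right)
    show "\<forall>i\<in>{1..m} - {1..k}. summand i = 0"
      using prod_powi_ratio_eq_0[of k _ m q] by (auto simp: summand_def)
  qed (use assms(3) in auto)
  then have "(q - 1) * (\<Sum>i\<in>{1..m}. summand i) = (\<Sum>i\<in>{1..k}. qbinom (q ^ 2) k i * falling i) * R"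
    using skew_grass_summand_eq[OF q[unfolded q_def]] assms(3)
    by (simp add: sum_distrib_left sum_distrib_right summand_def R_def falling_def q_def mult.commute)
  also have "(\<Sum>i\<in>{1..k}. qbinom (q ^ 2) k i * falling i) = (q ^ (2 * m + 1)) ^ k - 1"
    unfolding falling_def by (rule sum_qbinom_from_1)
  also have "R = (\<Prod>j\<in>{k + 1 .. m}. (q ^ (2 * j) - 1) / (q ^ (2 * j - 2 * k) - 1))"
  proof -
    have "(\<Prod>j\<in>{k + 1 .. k + (m - k)}. ((q ^ 2) ^ j - 1) / ((q ^ 2) ^ (j - k) - 1))
          = qfact (q ^ 2) (m - k + k) / (qfact (q ^ 2) (m - k) * qfact (q ^ 2) k)"
      by (rule prod_qratio_eq_qfact_quotient, rule not_root_of_unity_power[OF q]) simp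
    then show ?thesis
      using assms(3) by (simp add: R_def diff_mult_distrib2 flip: power_mult)
  qed
  finally have "(q - 1) * (\<Sum>i\<in>{1..m}. summand i)
      = (q ^ ((2 * m + 1) * k) - 1)
        * (\<Prod>j\<in>{k + 1 .. m}. (q ^ (2 * j) - 1) / (q ^ (2 * j - 2 * k) - 1))"
    by (simp only: power_mult)
  moreover have "q - 1 \<noteq> 0"
    using q unfolding not_root_of_unity_def by (metis power_one_right right_minus_eq zero_less_one)
  ultimately have "(\<Sum>i\<in>{1..m}. summand i)
      = (q ^ ((2 * m + 1) * k) - 1) / (q - 1)
        * (\<Prod>j\<in>{k + 1 .. m}. (q ^ (2 * j) - 1) / (q ^ (2 * j - 2 * k) - 1))"
    by (simp add: field_simps)
  then show ?thesis
    by (simp only: summand_def)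
qed

lemma Fract_power: "Fract (p :: 'a::idom) 1 ^ j = Fract (p ^ j) 1"
  by (induction j) (simp_all add: One_fract_def)

lemma not_root_of_unity_hd_uv: "not_root_of_unity (hd_u * hd_v)"
  unfolding not_root_of_unity_def
proof (intro allI impI notI)
  fix j :: nat
  assume "j > 0" and root: "(hd_u * hd_v) ^ j = 1"
  define p :: "int poly poly" where "p = [:0, [:0, 1:]:]"
  have "hd_u * hd_v = Fract p 1"
    by (simp add: hd_u_def hd_v_def p_def)
  then have "p ^ j = 1"
    using root by (simp add: Fract_power One_fract_def eq_fract)
  moreover have "degree (p ^ j) = j"
    by (simp add: p_def degree_power_eq)
  ultimately show False
    using \<open>j > 0\<close> by simp
qed

theorem proposition7p11:
  fixes n k :: nat
  assumes "odd n" and "1 \<le> k" and "2 * k + 3 \<le> n"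
  shows "(let u = hd_u; v = hd_v; q = u * v in
     (\<Sum>i\<in>{1..(n - 1) div 2}.
        hd_skew u v i * hd_grass u v (n - 2 * i) n *
        (\<Prod>j\<in>{int k - int i + 1 .. int ((n - 1) div 2) - int i}.
            (q powi (2 * j) - 1) / (q powi (2 * j - 2 * int k + 2 * int i) - 1)))
     = (q ^ (n * k) - 1) / (q - 1) *
        (\<Prod>j\<in>{k + 1 .. (n - 1) div 2}. (q ^ (2 * j) - 1) / (q ^ (2 * j - 2 * k) - 1)))"
proof -
  define m where "m = (n - 1) div 2"
  have n: "n = 2 * m + 1"
    using assms(1) unfolding m_def by presburger
  have "k \<le> m"
    using assms(3) unfolding m_def by linarith
  then show ?thesis
    unfolding Let_def m_def[symmetric] unfolding n
    by (rule skew_grass_sum_eq[OF not_root_of_unity_hd_uv])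
qed

end
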